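(* Let $C$ be a matrix satisfying the dominance condition and let $C'$ be a submatrix of $C$ (obtained by selecting a subset of rows and a subset of columns) such that every column of $C'$ contains an entry equal to $1$ and every row of $C'$ contains at most one entry equal to $1$. Then, in each row of $C'$, the sum of the entries different from $1$ is less than $1$.
   Context: A matrix $C_1$ covers $C_2$ if $C_1-C_2$ is entrywise nonnegative. A matrix is columnwise normal if its entries lie in $[0,1]$ and every column has at least one entry equal to $1$. A columnwise normal matrix with $n$ rows satisfies the dominance condition if (a) there is an $n\times n$ submatrix (formed by $n$ of its columns) covering a permutation matrix, and (b) for every $n\times n$ such submatrix covering a permutation matrix, the sum of each row is less than $2$. *)

theory Defs
  imports Complex_Main
begin

text \<open>A matrix with n rows and m columns is represented as a function
  C :: nat => nat => real, where C i j is the entry in row i < n, column j < m.\<close>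

definition columnwise_normal :: "nat \<Rightarrow> nat \<Rightarrow> (nat \<Rightarrow> nat \<Rightarrow> real) \<Rightarrow> bool" where
  "columnwise_normal n m C \<longleftrightarrow>
     (\<forall>i<n. \<forall>j<m. 0 \<le> C i j \<and> C i j \<le> 1) \<and> (\<forall>j<m. \<exists>i<n. C i j = 1)"

definition covers_perm :: "nat \<Rightarrow> (nat \<Rightarrow> nat \<Rightarrow> real) \<Rightarrow> nat set \<Rightarrow> bool" where
  "covers_perm n C T \<longleftrightarrow>
     (\<exists>p. bij_betw p {..<n} T \<and>
          (\<forall>i<n. \<forall>j\<in>T. C i j - (if j = p i then 1 else 0) \<ge> 0))"

definition dominance :: "nat \<Rightarrow> nat \<Rightarrow> (nat \<Rightarrow> nat \<Rightarrow> real) \<Rightarrow> bool" where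
  "dominance n m C \<longleftrightarrow>
     columnwise_normal n m C \<and>
     (\<exists>T. T \<subseteq> {..<m} \<and> card T = n \<and> covers_perm n C T) \<and>
     (\<forall>T. T \<subseteq> {..<m} \<and> card T = n \<and> covers_perm n C T \<longrightarrow>
          (\<forall>i<n. (\<Sum>j\<in>T. C i j) < 2))"

end

theory Submission
  imports Defs
begin

text \<open>Read the ones of C as a bipartite graph between rows and columns: in a columnwise normal
  matrix, a set T of columns covers a permutation matrix exactly when the rows can be perfectly
  matched onto T along ones. As each row of C' has at most one 1, choosing for every column x of
  C' a row f x with a 1 in column x gives an injective f. Starting from a perfect matching p onto
  a covering set T, while some column j of C' lies outside T, reassign row f j to j and drop the
  column p (f j) from T: this keeps a perfect matching and strictly decreases the number of
  columns x of C' with p (f x) \<noteq> x. Hence some covering set contains all columns of C'. Its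
  row-i sum is below 2 and includes a 1 together with all non-one entries of row i of C'.\<close>

definition perfect_matching :: "('r \<Rightarrow> 'c \<Rightarrow> bool) \<Rightarrow> 'r set \<Rightarrow> 'c set \<Rightarrow> ('r \<Rightarrow> 'c) \<Rightarrow> bool" where
  "perfect_matching E I T p \<longleftrightarrow> bij_betw p I T \<and> (\<forall>i\<in>I. E i (p i))"

lemma perfect_matching_swap:
  assumes "perfect_matching E I T p" and "r \<in> I" and "j \<notin> T" and "E r j"
  shows "perfect_matching E I (insert j (T - {p r})) (p(r := j))"
  using assms unfolding perfect_matching_def bij_betw_def inj_on_def by auto

lemma perfect_matching_extend:
  assumes "perfect_matching E I T p" and "finite S"
    and f: "inj_on f S" "f ` S \<subseteq> I" "\<forall>j\<in>S. E (f j) j"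
  shows "\<exists>T' p'. S \<subseteq> T' \<and> T' \<subseteq> T \<union> S \<and> perfect_matching E I T' p'"
  using assms(1)
proof (induction "card {x\<in>S. p (f x) \<noteq> x}" arbitrary: T p rule: less_induct)
  case less
  show ?case
  proof (cases "S \<subseteq> T")
    case True
    then show ?thesis using less.prems by blast
  next
    case False
    then obtain j where j: "j \<in> S" "j \<notin> T" by blast
    define p' where "p' = p(f j := j)"
    define T' where "T' = insert j (T - {p (f j)})"
    have pm': "perfect_matching E I T' p'"
      unfolding p'_def T'_def using j f by (intro perfect_matching_swap[OF less.prems]) auto
    have "p (f j) \<in> T"
      using less.prems f(2) j(1) unfolding perfect_matching_def by (blast dest: bij_betwE)
    then have "j \<in> {x\<in>S. p (f x) \<noteq> x}" using j by auto
    have "{x\<in>S. p' (f x) \<noteq> x} = {x\<in>S. p (f x) \<noteq> x} - {j}"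
      using j f(1) unfolding p'_def inj_on_def by auto
    also have "card \<dots> < card {x\<in>S. p (f x) \<noteq> x}"
      using \<open>finite S\<close> \<open>j \<in> {x\<in>S. p (f x) \<noteq> x}\<close> by (intro card_Diff1_less) auto
    finally have "card {x\<in>S. p' (f x) \<noteq> x} < card {x\<in>S. p (f x) \<noteq> x}" .
    then obtain T'' p'' where "S \<subseteq> T''" "T'' \<subseteq> T' \<union> S" "perfect_matching E I T'' p''"
      using less.hyps[OF _ pm'] by blast
    moreover have "T' \<subseteq> T \<union> S" using j unfolding T'_def by auto
    ultimately show ?thesis by blast
  qed
qed

lemma exists_inj_matching:
  assumes "finite S" and "\<forall>j\<in>S. \<exists>i\<in>R. E i j" and "\<forall>i\<in>R. card {j\<in>S. E i j} \<le> 1"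
  shows "\<exists>f. inj_on f S \<and> f ` S \<subseteq> R \<and> (\<forall>j\<in>S. E (f j) j)"
proof -
  have "\<forall>j\<in>S. \<exists>i. i \<in> R \<and> E i j" using assms(2) by blast
  then obtain f where f: "\<forall>j\<in>S. f j \<in> R \<and> E (f j) j"
    by (rule bchoice[elim_format]) blast
  have "inj_on f S"
  proof (rule inj_onI)
    fix x y assume "x \<in> S" "y \<in> S" "f x = f y"
    then have "x \<in> {j\<in>S. E (f x) j}" "y \<in> {j\<in>S. E (f x) j}"
      and "card {j\<in>S. E (f x) j} \<le> 1"
      using f assms(3) by auto
    then show "x = y" using \<open>finite S\<close> by (auto simp: card_le_Suc0_iff_eq)
  qed
  then show ?thesis using f by blast
qed

lemma covers_perm_iff_perfect_matching:
  assumes "\<forall>i<n. \<forall>j\<in>T. 0 \<le> C i j \<and> C i j \<le> 1"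
  shows "covers_perm n C T \<longleftrightarrow> (\<exists>p. perfect_matching (\<lambda>i j. C i j = 1) {..<n} T p)"
proof
  assume "covers_perm n C T"
  then obtain p where p: "bij_betw p {..<n} T"
    and cover: "\<forall>i<n. \<forall>j\<in>T. C i j - (if j = p i then 1 else 0) \<ge> 0"
    unfolding covers_perm_def by blast
  have "C i (p i) = 1" if "i < n" for i
  proof -
    have "p i \<in> T" using p that by (auto dest: bij_betwE)
    then show ?thesis using cover assms that by force
  qed
  then show "\<exists>p. perfect_matching (\<lambda>i j. C i j = 1) {..<n} T p"
    using p unfolding perfect_matching_def by auto
next
  assume "\<exists>p. perfect_matching (\<lambda>i j. C i j = 1) {..<n} T p"
  then obtain p where p: "bij_betw p {..<n} T" and ones: "\<forall>i<n. C i (p i) = 1"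
    unfolding perfect_matching_def by auto
  have "\<forall>i<n. \<forall>j\<in>T. C i j - (if j = p i then 1 else 0) \<ge> 0"
    using ones assms by simp
  then show "covers_perm n C T" using p unfolding covers_perm_def by (intro exI[of _ p]) simp
qed

lemma sum_entries_ne_1_lt_1:
  fixes a :: "'c \<Rightarrow> real"
  assumes "finite T" and "S \<subseteq> T" and "c \<in> T" and "a c = 1"
    and "\<forall>j\<in>T. 0 \<le> a j" and "(\<Sum>j\<in>T. a j) < 2"
  shows "(\<Sum>j\<in>{j\<in>S. a j \<noteq> 1}. a j) < 1"
proof -
  let ?X = "{j\<in>S. a j \<noteq> 1}"
  have "insert c ?X \<subseteq> T" using assms(2,3) by blast
  then have "finite ?X" using assms(1) finite_subset by auto
  then have "1 + (\<Sum>j\<in>?X. a j) = (\<Sum>j\<in>insert c ?X. a j)"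
    using assms(4) by simp
  also have "\<dots> \<le> (\<Sum>j\<in>T. a j)"
    using \<open>insert c ?X \<subseteq> T\<close> assms(1,5) by (intro sum_mono2) auto
  finally show ?thesis using assms(6) by simp
qed

lemma dominance_entries:
  assumes "dominance n m C" and "T \<subseteq> {..<m}"
  shows "\<forall>i<n. \<forall>j\<in>T. 0 \<le> C i j \<and> C i j \<le> 1"
  using assms unfolding dominance_def columnwise_normal_def by auto

lemma dominance_perfect_matching_exists:
  assumes "dominance n m C"
  obtains T p where "T \<subseteq> {..<m}" and "perfect_matching (\<lambda>i j. C i j = 1) {..<n} T p"
proof -
  obtain T where "T \<subseteq> {..<m}" "covers_perm n C T"
    using assms unfolding dominance_def by blast
  with covers_perm_iff_perfect_matching[OF dominance_entries[OF assms]] show ?thesis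
    using that by blast
qed

lemma dominance_perfect_matching_row_sum:
  assumes "dominance n m C" and "T \<subseteq> {..<m}"
    and p: "perfect_matching (\<lambda>i j. C i j = 1) {..<n} T p" and "i < n"
  shows "(\<Sum>j\<in>T. C i j) < 2"
proof -
  have "card T = n"
    using p bij_betw_same_card unfolding perfect_matching_def by fastforce
  moreover have "covers_perm n C T"
    using p covers_perm_iff_perfect_matching[OF dominance_entries[OF assms(1,2)]] by auto
  moreover have "\<forall>T. T \<subseteq> {..<m} \<and> card T = n \<and> covers_perm n C T \<longrightarrow> (\<forall>i<n. (\<Sum>j\<in>T. C i j) < 2)"
    using assms(1) unfolding dominance_def by simp
  ultimately show ?thesis using assms(2,4) by blast
qed

theorem lemma4p7:
  fixes n m :: nat and C :: "nat \<Rightarrow> nat \<Rightarrow> real" and R S :: "nat set"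
  assumes "dominance n m C"
    and "R \<subseteq> {..<n}" and "S \<subseteq> {..<m}"
    and "\<forall>j\<in>S. \<exists>i\<in>R. C i j = 1"
    and "\<forall>i\<in>R. card {j\<in>S. C i j = 1} \<le> 1"
  shows "\<forall>i\<in>R. (\<Sum>j\<in>{j\<in>S. C i j \<noteq> 1}. C i j) < 1"
proof
  fix i assume "i \<in> R"
  then have i: "i < n" using assms(2) by blast
  obtain T0 p0 where T0: "T0 \<subseteq> {..<m}" and "perfect_matching (\<lambda>i j. C i j = 1) {..<n} T0 p0"
    using dominance_perfect_matching_exists[OF assms(1)] by blast
  moreover have "finite S" using finite_subset[OF assms(3)] by simp
  moreover obtain f where "inj_on f S" "f ` S \<subseteq> {..<n}" "\<forall>j\<in>S. C (f j) j = 1"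
    using exists_inj_matching[OF \<open>finite S\<close> assms(4,5)] assms(2) by blast
  ultimately obtain T p where "S \<subseteq> T" "T \<subseteq> T0 \<union> S"
    and p: "perfect_matching (\<lambda>i j. C i j = 1) {..<n} T p"
    using perfect_matching_extend[of "\<lambda>i j. C i j = 1" "{..<n}" T0 p0 S f] by auto
  then have T: "T \<subseteq> {..<m}" using T0 assms(3) by blast
  have "p i \<in> T" "C i (p i) = 1"
    using p i unfolding perfect_matching_def by (auto dest: bij_betwE)
  moreover have "\<forall>j\<in>T. 0 \<le> C i j" using dominance_entries[OF assms(1) T] i by blast
  moreover have "(\<Sum>j\<in>T. C i j) < 2"
    using dominance_perfect_matching_row_sum[OF assms(1) T p i] .
  ultimately show "(\<Sum>j\<in>{j\<in>S. C i j \<noteq> 1}. C i j) < 1"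
    using sum_entries_ne_1_lt_1[OF finite_subset[OF T finite_lessThan] \<open>S \<subseteq> T\<close>] by blast
qed

end
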